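(* For every integer $n\ge 0$, $c_3(11n+5)\equiv c_3(11n+7)\equiv c_3(11n+9)\equiv 0\pmod 2$.
   Context: A partition of $n\ge 0$ is a finite multiset of positive integers summing to $n$. For $n\ge 0$, $c_3(n)$ denotes the number of partitions $\lambda$ of $n$ for which there exists an integer $j\ge 1$ such that: the part $1$ appears in $\lambda$ exactly $j^2$ or exactly $j^2+1$ times; every odd part greater than $1$ appears at most once; the even parts of $\lambda$ are distinct; and every even part of $\lambda$ is either at most $2j$, or is a multiple of $4$ that is at least $4j+4$ (in particular no even integer in $\{2j+2,2j+4,\dots,4j+2\}$ is a part). *)

theory Defs
  imports Main "HOL-Library.Multiset"
begin

definition is_partition :: "nat multiset \<Rightarrow> nat \<Rightarrow> bool" where
  "is_partition p n \<longleftrightarrow> (\<forall>x\<in>#p. 0 < x) \<and> sum_mset p = n"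

definition c3_cond :: "nat multiset \<Rightarrow> bool" where
  "c3_cond p \<longleftrightarrow> (\<exists>j::nat. j \<ge> 1 \<and>
      (count p 1 = j^2 \<or> count p 1 = j^2 + 1) \<and>
      (\<forall>k. odd k \<and> k > 1 \<longrightarrow> count p k \<le> 1) \<and>
      (\<forall>k. even k \<longrightarrow> count p k \<le> 1) \<and>
      (\<forall>k\<in>#p. even k \<longrightarrow> (k \<le> 2*j \<or> (4 dvd k \<and> k \<ge> 4*j + 4))))"

definition c3 :: "nat \<Rightarrow> nat" where
  "c3 n = card {p. is_partition p n \<and> c3_cond p}"

end

theory Submission
  imports Defs "HOL-Computational_Algebra.Formal_Power_Series" "HOL-Library.Z2"
begin

text \<open>Work over GF(2), where 1 - q^n = 1 + q^n. Counting the ones separately, the generating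
  function of c3 is the sum over j \<ge> 1 of q^(j^2) (1 + q) \<Prod>k\<in>S_j. (1 + q^k), where S_j is the
  set of parts other than 1 allowed for j, and
  (1 + q) \<Prod>k\<in>S_j. (1 + q^k) = E \<Prod>k>j. (1 + q^(2k)) with E = \<Prod>n. (1 + q^n) = (q; q)_\<infinity>.
  Euler's identity \<Sum>j\<ge>0. q^(j^2) \<Prod>k>j. (1 + q^(2k)) = \<Prod>k. (1 + q^(2k-1)) (1 + q^(2k)) = E,
  together with \<Prod>k. (1 + q^(2k)) = E^2, turns this into E (E + E^2) = E^2 + E^3. Jacobi's triple
  product gives E^2 = \<Sum>t. q^(3t^2+t) and E^3 = \<Sum>t. q^(2t^2-t), and neither 3t^2 + t nor
  2t^2 - t is 5, 7 or 9 modulo 11. Infinite products are handled through agreement of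
  coefficients below a bound, and the finite triple product comes from Rothe's q-binomial
  theorem.\<close>

unbundle fps_syntax

section \<open>Power series modulo 2 and truncated equality\<close>

type_synonym bfps = "bit fps"

lemma bfps_add_self [simp]: "(f::bfps) + f = 0"
proof (rule fps_ext)
  fix n
  have "(x::bit) + x = 0" for x by (cases x) simp_all
  thus "(f + f) $ n = 0 $ n" by (simp only: fps_add_nth fps_zero_nth)
qed

lemma bfps_two [simp]: "(2::bfps) = 0"
  by (metis one_add_one bfps_add_self)

lemma bfps_power2_add: "((f::bfps) + g)^2 = f^2 + g^2"
  by (simp add: power2_sum)

lemma bfps_power2_sum: "(\<Sum>x\<in>A. (f x :: bfps))^2 = (\<Sum>x\<in>A. (f x)^2)"
  by (induction A rule: infinite_finite_induct) (auto simp: bfps_power2_add)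

definition fps_eq_upto :: "nat \<Rightarrow> 'a::zero fps \<Rightarrow> 'a fps \<Rightarrow> bool" where
  "fps_eq_upto K f g \<longleftrightarrow> (\<forall>i<K. f $ i = g $ i)"

lemma fps_eq_upto_refl [simp]: "fps_eq_upto K f f"
  by (simp add: fps_eq_upto_def)

lemma fps_eq_upto_sym: "fps_eq_upto K f g \<Longrightarrow> fps_eq_upto K g f"
  by (simp add: fps_eq_upto_def)

lemma fps_eq_upto_trans [trans]:
  "fps_eq_upto K f g \<Longrightarrow> fps_eq_upto K g h \<Longrightarrow> fps_eq_upto K f h"
  by (simp add: fps_eq_upto_def)

lemma fps_eq_upto_mono: "fps_eq_upto K f g \<Longrightarrow> K' \<le> K \<Longrightarrow> fps_eq_upto K' f g"
  by (simp add: fps_eq_upto_def)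

lemma fps_eq_upto_nth: "fps_eq_upto K f g \<Longrightarrow> m < K \<Longrightarrow> f $ m = g $ m"
  by (simp add: fps_eq_upto_def)

lemma fps_eq_upto_add:
  "fps_eq_upto K f g \<Longrightarrow> fps_eq_upto K f' g' \<Longrightarrow> fps_eq_upto K (f + f') (g + g')"
  for f g :: "'a::monoid_add fps"
  by (simp add: fps_eq_upto_def)

lemma fps_eq_upto_sum:
  "(\<And>x. x \<in> A \<Longrightarrow> fps_eq_upto K (f x) (g x)) \<Longrightarrow> fps_eq_upto K (sum f A) (sum g A)"
  for f g :: "_ \<Rightarrow> 'a::comm_monoid_add fps"
  by (induction A rule: infinite_finite_induct) (auto intro: fps_eq_upto_add)

lemma fps_eq_upto_mult_right:
  "fps_eq_upto K f g \<Longrightarrow> fps_eq_upto K (f * h) (g * h)"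
  for f g h :: "'a::comm_semiring_1 fps"
  unfolding fps_eq_upto_def fps_mult_nth by auto

lemma fps_eq_upto_mult_left:
  "fps_eq_upto K f g \<Longrightarrow> fps_eq_upto K (h * f) (h * g)"
  for f g h :: "'a::comm_semiring_1 fps"
  using fps_eq_upto_mult_right[of K f g h] by (simp add: mult.commute)

lemma fps_eq_upto_mult:
  "fps_eq_upto K f g \<Longrightarrow> fps_eq_upto K f' g' \<Longrightarrow> fps_eq_upto K (f * f') (g * g')"
  for f g :: "'a::comm_semiring_1 fps"
  by (meson fps_eq_upto_mult_left fps_eq_upto_mult_right fps_eq_upto_trans)

lemma fps_eq_upto_mult_cancel:
  fixes f g u :: "'a::field fps"
  assumes "fps_eq_upto K (f * u) (g * u)" "u $ 0 \<noteq> 0"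
  shows "fps_eq_upto K f g"
proof -
  have "fps_eq_upto K (f * u * inverse u) (g * u * inverse u)"
    using assms(1) by (rule fps_eq_upto_mult_right)
  thus ?thesis
    using inverse_mult_eq_1'[OF assms(2)] by (simp add: mult.assoc)
qed

lemma fps_eq_upto_X_power_mult_0:
  "K \<le> e \<Longrightarrow> fps_eq_upto K (fps_X ^ e * f) 0"
  for f :: "'a::comm_semiring_1 fps"
  by (simp add: fps_eq_upto_def fps_X_power_mult_nth)

lemma fps_X_power_mult_cancel:
  "fps_X ^ e * f = fps_X ^ e * g \<Longrightarrow> f = g"
  for f g :: "'a::comm_semiring_1 fps"
proof (rule fps_ext)
  fix n assume "fps_X ^ e * f = fps_X ^ e * g"
  hence "(fps_X ^ e * f) $ (n + e) = (fps_X ^ e * g) $ (n + e)" by simp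
  thus "f $ n = g $ n" by (simp add: fps_X_power_mult_nth)
qed

lemma prod_1_plus_X_power_eq_upto_1:
  fixes e :: "'b \<Rightarrow> nat"
  assumes "finite G" "\<And>m. m \<in> G \<Longrightarrow> K \<le> e m"
  shows "fps_eq_upto K (\<Prod>m\<in>G. 1 + fps_X ^ e m :: 'a::comm_semiring_1 fps) 1"
  using assms
proof (induction G rule: finite_induct)
  case (insert x G)
  let ?p = "\<Prod>m\<in>G. 1 + fps_X ^ e m :: 'a fps"
  have "fps_eq_upto K (?p + fps_X ^ e x * ?p) (1 + 0)"
    using insert by (intro fps_eq_upto_add fps_eq_upto_X_power_mult_0) auto
  thus ?case using insert by (simp add: algebra_simps)
qed simp

section \<open>Products of \<open>1 + X\<^sup>s\<close> over sets of parts\<close>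

definition fin_prod :: "nat set \<Rightarrow> bfps" where
  "fin_prod F = (\<Prod>s\<in>F. 1 + fps_X ^ s)"

text \<open>A part \<open>0\<close> is ignored: its factor \<open>1 + X\<^sup>0\<close> would be \<open>0\<close> modulo 2.\<close>
definition inf_prod :: "nat set \<Rightarrow> bfps" where
  "inf_prod S = Abs_fps (\<lambda>n. fin_prod (S \<inter> {1..n}) $ n)"

lemma fin_prod_empty [simp]: "fin_prod {} = 1"
  by (simp add: fin_prod_def)

lemma fin_prod_Un:
  "finite F \<Longrightarrow> finite G \<Longrightarrow> F \<inter> G = {} \<Longrightarrow> fin_prod (F \<union> G) = fin_prod F * fin_prod G"
  unfolding fin_prod_def by (rule prod.union_disjoint)

lemma fin_prod_image:
  "inj_on f A \<Longrightarrow> fin_prod (f ` A) = (\<Prod>x\<in>A. 1 + fps_X ^ f x)"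
  unfolding fin_prod_def by (simp add: prod.reindex)

lemma fin_prod_eq_upto_Int_lessThan:
  assumes "finite F"
  shows "fps_eq_upto K (fin_prod F) (fin_prod (F \<inter> {..<K}))"
proof -
  have "fin_prod F = fin_prod (F \<inter> {..<K}) * fin_prod (F - {..<K})"
    unfolding fin_prod_def using assms by (rule prod.Int_Diff)
  moreover have "fps_eq_upto K (fin_prod (F - {..<K})) 1"
    unfolding fin_prod_def using assms by (intro prod_1_plus_X_power_eq_upto_1) auto
  hence "fps_eq_upto K (fin_prod (F \<inter> {..<K}) * fin_prod (F - {..<K})) (fin_prod (F \<inter> {..<K}) * 1)"
    by (rule fps_eq_upto_mult_left)
  ultimately show ?thesis by simp
qed

lemma fin_prod_eq_upto:
  assumes "finite F" "finite G" "F \<inter> {..<K} = G \<inter> {..<K}"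
  shows "fps_eq_upto K (fin_prod F) (fin_prod G)"
  using fin_prod_eq_upto_Int_lessThan[OF assms(1)] fin_prod_eq_upto_Int_lessThan[OF assms(2)] assms(3)
  by (metis fps_eq_upto_sym fps_eq_upto_trans)

lemma inf_prod_eq_upto_fin_prod:
  assumes "finite F" "F \<inter> {..<K} = (S - {0}) \<inter> {..<K}"
  shows "fps_eq_upto K (inf_prod S) (fin_prod F)"
  unfolding fps_eq_upto_def
proof (intro allI impI)
  fix i assume i: "i < K"
  have "S \<inter> {1..i} \<inter> {..<Suc i} = F \<inter> {..<Suc i}"
  proof -
    have "F \<inter> {..<Suc i} = F \<inter> {..<K} \<inter> {..<Suc i}" using i by auto
    also have "\<dots> = (S - {0}) \<inter> {..<K} \<inter> {..<Suc i}" using assms(2) by simp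
    also have "\<dots> = S \<inter> {1..i}" using i by auto
    finally show ?thesis by auto
  qed
  hence "fps_eq_upto (Suc i) (fin_prod (S \<inter> {1..i})) (fin_prod F)"
    using assms(1) by (intro fin_prod_eq_upto) auto
  thus "inf_prod S $ i = fin_prod F $ i"
    by (simp add: inf_prod_def fps_eq_upto_def)
qed

lemma inf_prod_eq_upto_trunc: "fps_eq_upto (Suc n) (inf_prod S) (fin_prod (S \<inter> {1..n}))"
  by (rule inf_prod_eq_upto_fin_prod) auto

lemma inf_prod_nth_0 [simp]: "inf_prod S $ 0 = 1"
  by (simp add: inf_prod_def)

lemma inf_prod_nonzero: "inf_prod S \<noteq> 0"
  using inf_prod_nth_0[of S] by (metis fps_zero_nth zero_neq_one)

lemma inf_prod_Diff_0: "inf_prod (S - {0}) = inf_prod S"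
  by (rule fps_ext) (simp add: inf_prod_def Diff_Int_distrib2 Int_absorb2 atLeastAtMost_iff)

lemma inf_prod_insert_0: "inf_prod (insert 0 S) = inf_prod S"
  by (rule fps_ext) (simp add: inf_prod_def)

lemma inf_prod_singleton_1: "inf_prod {1} = 1 + fps_X"
proof (rule fps_ext)
  fix n show "inf_prod {1} $ n = (1 + fps_X) $ n"
  proof (cases n)
    case (Suc m)
    hence "{1::nat} \<inter> {1..n} = {1}" by auto
    thus ?thesis by (simp add: inf_prod_def fin_prod_def)
  qed simp
qed

lemma inf_prod_Un:
  assumes "S \<inter> T = {}"
  shows "inf_prod (S \<union> T) = inf_prod S * inf_prod T"
proof (rule fps_ext)
  fix n
  have "fps_eq_upto (Suc n) (inf_prod S * inf_prod T) (fin_prod (S \<inter> {1..n}) * fin_prod (T \<inter> {1..n}))"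
    by (intro fps_eq_upto_mult inf_prod_eq_upto_trunc)
  also have "fin_prod (S \<inter> {1..n}) * fin_prod (T \<inter> {1..n}) = fin_prod ((S \<union> T) \<inter> {1..n})"
    using assms by (subst fin_prod_Un[symmetric]) (auto simp: Int_Un_distrib2)
  finally have "fps_eq_upto (Suc n) (inf_prod S * inf_prod T) (inf_prod (S \<union> T))"
    using inf_prod_eq_upto_trunc fps_eq_upto_sym fps_eq_upto_trans by blast
  thus "inf_prod (S \<union> T) $ n = (inf_prod S * inf_prod T) $ n"
    by (simp add: fps_eq_upto_def)
qed

text \<open>The Frobenius map \<open>f \<mapsto> f\<^sup>2\<close> doubles all parts.\<close>
lemma fin_prod_double: "finite F \<Longrightarrow> fin_prod ((*) 2 ` F) = (fin_prod F)^2"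
proof -
  assume "finite F"
  have "fin_prod ((*) 2 ` F) = (\<Prod>s\<in>F. 1 + fps_X ^ (2 * s))"
    by (rule fin_prod_image) (auto simp: inj_on_def)
  also have "\<dots> = (\<Prod>s\<in>F. (1 + fps_X ^ s)^2)"
    by (intro prod.cong) (auto simp: bfps_power2_add power_mult[symmetric] mult.commute)
  also have "\<dots> = (fin_prod F)^2" by (simp add: fin_prod_def prod_power_distrib)
  finally show ?thesis .
qed

lemma inf_prod_double: "inf_prod ((*) 2 ` S) = (inf_prod S)^2"
proof (rule fps_ext)
  fix n
  have "fps_eq_upto (Suc n) ((inf_prod S)^2) ((fin_prod (S \<inter> {1..n}))^2)"
    unfolding power2_eq_square by (intro fps_eq_upto_mult inf_prod_eq_upto_trunc)
  also have "(fin_prod (S \<inter> {1..n}))^2 = fin_prod ((*) 2 ` (S \<inter> {1..n}))"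
    by (simp add: fin_prod_double)
  finally have "fps_eq_upto (Suc n) ((inf_prod S)^2) (fin_prod ((*) 2 ` (S \<inter> {1..n})))" .
  moreover have "fps_eq_upto (Suc n) (inf_prod ((*) 2 ` S)) (fin_prod ((*) 2 ` (S \<inter> {1..n})))"
    by (rule inf_prod_eq_upto_fin_prod) (auto simp: image_iff)
  ultimately show "inf_prod ((*) 2 ` S) $ n = (inf_prod S)^2 $ n"
    by (meson fps_eq_upto_sym fps_eq_upto_trans fps_eq_upto_nth lessI)
qed

section \<open>Gaussian binomial coefficients\<close>

fun tri :: "nat \<Rightarrow> nat" where
  "tri 0 = 0"
| "tri (Suc k) = tri k + k"

text \<open>The Gaussian binomial coefficient in \<open>q = X\<^sup>a\<close>, via the \<open>q\<close>-Pascal rule.\<close>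
fun qbinom :: "nat \<Rightarrow> nat \<Rightarrow> nat \<Rightarrow> 'a::comm_semiring_1 fps" where
  "qbinom a 0 k = (if k = 0 then 1 else 0)"
| "qbinom a (Suc M) 0 = 1"
| "qbinom a (Suc M) (Suc k) = qbinom a M (Suc k) + fps_X ^ (a * (M - k)) * qbinom a M k"

lemma qbinom_0 [simp]: "qbinom a M 0 = 1"
  by (cases M) auto

lemma qbinom_eq_0: "M < k \<Longrightarrow> qbinom a M k = 0"
proof (induction M arbitrary: k)
  case (Suc M)
  then obtain k' where "k = Suc k'" by (cases k) auto
  with Suc show ?case by simp
qed simp

lemma qbinom_diag [simp]: "qbinom a M M = 1"
  by (induction M) (auto simp: qbinom_eq_0)

lemma rothe_q_binomial:
  fixes v w :: "'a::comm_semiring_1 fps"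
  shows "(\<Prod>u<M. v + w * fps_X ^ (a * u))
    = (\<Sum>k\<le>M. w ^ k * v ^ (M - k) * fps_X ^ (a * tri k) * qbinom a M k)"
proof (induction M)
  case (Suc M)
  define R where "R = (\<Sum>k\<le>M. w ^ k * v ^ (M - k) * fps_X ^ (a * tri k) * qbinom a M k)"
  have v_part: "v ^ Suc M + (\<Sum>k\<le>M. w ^ Suc k * v ^ (M - k) * fps_X ^ (a * tri (Suc k)) * qbinom a M (Suc k))
      = R * v"
  proof -
    have "v ^ Suc M + (\<Sum>k\<le>M. w ^ Suc k * v ^ (M - k) * fps_X ^ (a * tri (Suc k)) * qbinom a M (Suc k))
        = (\<Sum>k\<le>Suc M. w ^ k * v ^ (Suc M - k) * fps_X ^ (a * tri k) * qbinom a M k)"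
      by (subst sum.atMost_Suc_shift) simp
    also have "\<dots> = (\<Sum>k\<le>M. w ^ k * v ^ (Suc M - k) * fps_X ^ (a * tri k) * qbinom a M k)"
      by (simp add: qbinom_eq_0)
    also have "\<dots> = R * v"
      unfolding R_def sum_distrib_right
      by (intro sum.cong refl) (simp add: Suc_diff_le ac_simps)
    finally show ?thesis .
  qed
  have w_part: "(\<Sum>k\<le>M. w ^ Suc k * v ^ (M - k) * fps_X ^ (a * tri (Suc k)) * (fps_X ^ (a * (M - k)) * qbinom a M k))
      = R * (w * fps_X ^ (a * M))"
    unfolding R_def sum_distrib_right
  proof (intro sum.cong refl)
    fix k assume "k \<in> {..M}"
    hence "tri (Suc k) + (M - k) = tri k + M" by simp
    hence "a * tri (Suc k) + a * (M - k) = a * tri k + a * M"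
      by (metis add_mult_distrib2)
    hence "fps_X ^ (a * tri (Suc k)) * fps_X ^ (a * (M - k)) = (fps_X ^ (a * tri k) * fps_X ^ (a * M) :: 'a fps)"
      by (simp only: power_add[symmetric])
    thus "w ^ Suc k * v ^ (M - k) * fps_X ^ (a * tri (Suc k)) * (fps_X ^ (a * (M - k)) * qbinom a M k)
        = w ^ k * v ^ (M - k) * fps_X ^ (a * tri k) * qbinom a M k * (w * fps_X ^ (a * M))"
      by (simp only: ac_simps power_Suc)
  qed
  have "(\<Sum>k\<le>Suc M. w ^ k * v ^ (Suc M - k) * fps_X ^ (a * tri k) * qbinom a (Suc M) k)
      = v ^ Suc M + (\<Sum>k\<le>M. w ^ Suc k * v ^ (M - k) * fps_X ^ (a * tri (Suc k)) * qbinom a (Suc M) (Suc k))"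
    by (subst sum.atMost_Suc_shift) simp
  also have "\<dots> = R * v + R * (w * fps_X ^ (a * M))"
    by (simp only: qbinom.simps(3) distrib_left sum.distrib add.assoc[symmetric] v_part w_part)
  also have "\<dots> = (\<Prod>u<Suc M. v + w * fps_X ^ (a * u))"
    using Suc by (simp add: R_def distrib_left)
  finally show ?case ..
qed simp

text \<open>Modulo 2 the product \<open>\<Prod>(1 + X\<^sup>a\<^sup>m)\<close> is the \<open>q\<close>-Pochhammer symbol \<open>(q; q)\<^sub>n\<close> in \<open>q = X\<^sup>a\<close>.\<close>
definition qpoch :: "nat \<Rightarrow> nat \<Rightarrow> bfps" where
  "qpoch a n = (\<Prod>m\<in>{1..n}. 1 + fps_X ^ (a * m))"

lemma qpoch_0 [simp]: "qpoch a 0 = 1"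
  by (simp add: qpoch_def)

lemma qpoch_Suc: "qpoch a (Suc n) = qpoch a n * (1 + fps_X ^ (a * Suc n))"
  by (simp add: qpoch_def mult.commute)

lemma qpoch_nth_0 [simp]: "0 < a \<Longrightarrow> qpoch a n $ 0 = 1"
  by (induction n) (simp_all add: qpoch_Suc)

lemma qbinom_qpoch: "k \<le> M \<Longrightarrow> qbinom a M k * qpoch a k * qpoch a (M - k) = qpoch a M"
proof (induction M arbitrary: k)
  case (Suc M)
  show ?case
  proof (cases k)
    case (Suc k')
    show ?thesis
    proof (cases "k' = M")
      case True thus ?thesis using Suc by (simp add: qbinom_eq_0)
    next
      case False
      hence "k' < M" using Suc Suc.prems by simp
      define d where "d = M - k'"
      define u :: bfps where "u = fps_X ^ (a * d)"
      define w :: bfps where "w = fps_X ^ (a * Suc k')"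
      define x1 :: bfps where "x1 = qbinom a M (Suc k')"
      define x0 :: bfps where "x0 = qbinom a M k'"
      define p where "p = qpoch a k'"
      define q where "q = qpoch a (d - 1)"
      have "Suc (d - 1) = d" using \<open>k' < M\<close> by (simp add: d_def)
      hence d: "Suc M - Suc k' = d" "M - Suc k' = d - 1" "qpoch a d = q * (1 + u)"
        using qpoch_Suc[of a "d - 1"] by (auto simp: d_def u_def q_def)
      have IH1: "x1 * p * (1 + w) * q = qpoch a M"
        using Suc.IH[of "Suc k'"] \<open>k' < M\<close> d by (simp add: qpoch_Suc x1_def p_def w_def q_def mult.assoc)
      have IH0: "x0 * p * q * (1 + u) = qpoch a M"
        using Suc.IH[of k'] \<open>k' < M\<close> d by (simp add: x0_def p_def d_def mult.assoc)
      have "qbinom a (Suc M) k * qpoch a k * qpoch a (Suc M - k) = (x1 + u * x0) * (p * (1 + w)) * (q * (1 + u))"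
        using Suc d by (simp add: x1_def x0_def p_def u_def w_def d_def qpoch_Suc)
      also have "\<dots> = (x1 * p * (1 + w) * q) * (1 + u) + u * (x0 * p * q * (1 + u)) * (1 + w)"
        by (simp add: algebra_simps)
      \<comment> \<open>the two copies of \<open>u \<cdot> qpoch a M\<close> cancel modulo 2\<close>
      also have "\<dots> = qpoch a M * (1 + u * w)"
        unfolding IH0 IH1 by (simp add: algebra_simps)
      also have "u * w = fps_X ^ (a * Suc M)"
        using \<open>k' < M\<close> by (simp add: u_def w_def d_def power_add[symmetric] algebra_simps)
      finally show ?thesis by (simp add: qpoch_Suc)
    qed
  qed simp
qed simp

lemma qpoch_split: "i \<le> j \<Longrightarrow> qpoch a j = qpoch a i * (\<Prod>m\<in>{i<..j}. 1 + fps_X ^ (a * m))"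
proof -
  assume "i \<le> j"
  hence "{1..j} = {1..i} \<union> {i<..j}" by auto
  thus ?thesis unfolding qpoch_def by (simp add: prod.union_disjoint ivl_disj_int)
qed

lemma qpoch_eq_upto_le: "i \<le> j \<Longrightarrow> fps_eq_upto (a * (i + 1)) (qpoch a j) (qpoch a i)"
proof -
  assume ij: "i \<le> j"
  have "fps_eq_upto (a * (i + 1)) (\<Prod>m\<in>{i<..j}. 1 + fps_X ^ (a * m)) 1"
  proof (rule prod_1_plus_X_power_eq_upto_1)
    fix m assume "m \<in> {i<..j}"
    hence "i + 1 \<le> m" by simp
    thus "a * (i + 1) \<le> a * m" by (rule mult_le_mono2)
  qed simp
  from fps_eq_upto_mult_left[OF this, of "qpoch a i"] show ?thesis
    using qpoch_split[OF ij] by simp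
qed

lemma qpoch_eq_upto: "r \<le> i \<Longrightarrow> r \<le> j \<Longrightarrow> fps_eq_upto (a * (r + 1)) (qpoch a i) (qpoch a j)"
proof -
  assume "r \<le> i" "r \<le> j"
  hence "fps_eq_upto (a * (r + 1)) (qpoch a i) (qpoch a r)" "fps_eq_upto (a * (r + 1)) (qpoch a j) (qpoch a r)"
    by (simp_all only: qpoch_eq_upto_le)
  thus ?thesis by (meson fps_eq_upto_sym fps_eq_upto_trans)
qed

text \<open>In low degrees \<open>[M, k]\<close> behaves like \<open>1 / (q; q)\<^sub>\<infinity>\<close>; this is what lets the finite
  product identities below converge to infinite ones.\<close>
lemma qbinom_qpoch_eq_upto_1:
  assumes "k \<le> M" "min k (M - k) \<le> L" "0 < a"
  shows "fps_eq_upto (a * (min k (M - k) + 1)) (qbinom a M k * qpoch a L) 1"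
proof -
  define K where "K = a * (min k (M - k) + 1)"
  have P: "fps_eq_upto K (qpoch a k) (qpoch a L)" "fps_eq_upto K (qpoch a (M - k)) (qpoch a L)"
    "fps_eq_upto K (qpoch a M) (qpoch a L)"
    unfolding K_def by (rule qpoch_eq_upto; use assms in auto)+
  have "fps_eq_upto K (qbinom a M k * qpoch a L * qpoch a L) (qbinom a M k * qpoch a k * qpoch a (M - k))"
    using P by (intro fps_eq_upto_mult fps_eq_upto_refl) (auto intro: fps_eq_upto_sym)
  also have "qbinom a M k * qpoch a k * qpoch a (M - k) = qpoch a M"
    using qbinom_qpoch[OF assms(1)] .
  finally have "fps_eq_upto K ((qbinom a M k * qpoch a L) * qpoch a L) (1 * qpoch a L)"
    using P(3) fps_eq_upto_trans by (simp add: mult.assoc)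
  hence "fps_eq_upto K (qbinom a M k * qpoch a L) 1"
    by (rule fps_eq_upto_mult_cancel) (simp add: assms)
  thus ?thesis by (simp add: K_def)
qed

lemma qbinom_qpoch_eq_upto_tail:
  assumes "k \<le> M" "0 < a"
  shows "fps_eq_upto (a * (M - k + 1)) (qbinom a M k * qpoch a M) (\<Prod>m\<in>{k<..M}. 1 + fps_X ^ (a * m))"
proof -
  define R :: bfps where "R = (\<Prod>m\<in>{k<..M}. 1 + fps_X ^ (a * m))"
  define K where "K = a * (M - k + 1)"
  have "fps_eq_upto K (qbinom a M k * qpoch a M * qpoch a M) (qbinom a M k * qpoch a M * qpoch a (M - k))"
    unfolding K_def by (intro fps_eq_upto_mult_left qpoch_eq_upto) auto
  also have "qbinom a M k * qpoch a M * qpoch a (M - k) = (qbinom a M k * qpoch a k * qpoch a (M - k)) * R"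
    by (subst qpoch_split[OF assms(1)]) (simp add: R_def ac_simps)
  also have "\<dots> = R * qpoch a M"
    unfolding qbinom_qpoch[OF assms(1)] by (rule mult.commute)
  finally have "fps_eq_upto K ((qbinom a M k * qpoch a M) * qpoch a M) (R * qpoch a M)" .
  hence "fps_eq_upto K (qbinom a M k * qpoch a M) R"
    by (rule fps_eq_upto_mult_cancel) (simp add: assms)
  thus ?thesis by (simp add: K_def R_def)
qed

section \<open>Euler's identity for partitions into distinct odd parts\<close>

definition even_parts_gt :: "nat \<Rightarrow> nat set" where
  "even_parts_gt k = (*) 2 ` {k<..}"

lemma tri_square: "k + 2 * tri k = k * k"
  by (induction k) (auto simp: algebra_simps)

lemma fin_prod_odd_qpoch:
  "fin_prod ((\<lambda>u. 2 * u + 1) ` {..<M}) * qpoch 2 M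
    = (\<Sum>k\<le>M. fps_X ^ (k * k) * (qbinom 2 M k * qpoch 2 M))"
proof -
  have "fin_prod ((\<lambda>u. 2 * u + 1) ` {..<M}) = (\<Prod>u<M. 1 + fps_X * fps_X ^ (2 * u))"
    by (subst fin_prod_image) (auto simp: inj_on_def power_Suc)
  also have "\<dots> = (\<Sum>k\<le>M. fps_X ^ (k * k) * qbinom 2 M k)"
    by (subst rothe_q_binomial) (simp add: tri_square[symmetric] power_add mult.assoc)
  finally show ?thesis by (simp add: sum_distrib_right mult.assoc)
qed

lemma X_square_qbinom_qpoch_eq_upto:
  assumes "k \<le> 2 * N"
  shows "fps_eq_upto (Suc N) (fps_X ^ (k * k) * (qbinom 2 (2 * N) k * qpoch 2 (2 * N)))
    (fps_X ^ (k * k) * inf_prod (even_parts_gt k))"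
proof (cases "Suc N \<le> k * k")
  case True
  thus ?thesis by (meson fps_eq_upto_X_power_mult_0 fps_eq_upto_sym fps_eq_upto_trans)
next
  case False
  hence "k \<le> N" by (metis le_square le_trans not_less_eq_eq)
  have "fps_eq_upto (2 * (2 * N - k + 1)) (qbinom 2 (2 * N) k * qpoch 2 (2 * N))
      (\<Prod>m\<in>{k<..2 * N}. 1 + fps_X ^ (2 * m))"
    using qbinom_qpoch_eq_upto_tail[OF assms, of 2] by simp
  hence "fps_eq_upto (Suc N) (qbinom 2 (2 * N) k * qpoch 2 (2 * N)) (fin_prod ((*) 2 ` {k<..2 * N}))"
    using \<open>k \<le> N\<close> by (subst fin_prod_image) (auto simp: inj_on_def elim: fps_eq_upto_mono)
  moreover have "fps_eq_upto (Suc N) (inf_prod (even_parts_gt k)) (fin_prod ((*) 2 ` {k<..2 * N}))"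
    by (rule inf_prod_eq_upto_fin_prod) (auto simp: even_parts_gt_def image_iff)
  ultimately show ?thesis
    by (metis fps_eq_upto_mult_left fps_eq_upto_sym fps_eq_upto_trans)
qed

lemma inf_prod_odd_eq_upto:
  "fps_eq_upto (Suc N) (inf_prod {x. odd x}) (fin_prod ((\<lambda>u. 2 * u + 1) ` {..<2 * N}))"
proof (rule inf_prod_eq_upto_fin_prod)
  show "(\<lambda>u. 2 * u + 1) ` {..<2 * N} \<inter> {..<Suc N} = ({x. odd x} - {0}) \<inter> {..<Suc N}"
  proof (intro equalityI subsetI)
    fix x assume "x \<in> ({x. odd x} - {0}) \<inter> {..<Suc N}"
    hence "odd x" "x \<le> N" by auto
    hence "x = 2 * (x div 2) + 1" "x div 2 < 2 * N" by presburger+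
    thus "x \<in> (\<lambda>u. 2 * u + 1) ` {..<2 * N} \<inter> {..<Suc N}"
      using \<open>x \<le> N\<close> by (metis IntI image_eqI lessThan_iff le_imp_less_Suc)
  qed auto
qed simp

lemma inf_prod_even_parts_gt_0_eq_upto:
  "fps_eq_upto (Suc N) (inf_prod (even_parts_gt 0)) (qpoch 2 (2 * N))"
proof -
  have "qpoch 2 (2 * N) = fin_prod ((*) 2 ` {1..2 * N})"
    unfolding qpoch_def by (subst fin_prod_image) (auto simp: inj_on_def)
  moreover have "fps_eq_upto (Suc N) (inf_prod (even_parts_gt 0)) (fin_prod ((*) 2 ` {1..2 * N}))"
    by (rule inf_prod_eq_upto_fin_prod) (auto simp: even_parts_gt_def image_iff)
  ultimately show ?thesis by simp
qed

text \<open>Modulo 2 this is \<Prod>k. (1 + q^(2k-1)) = \<Sum>k. q^(k^2) / (q^2; q^2)_k multiplied by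
  (q^2; q^2)_\<infinity>; the finite form is Rothe's theorem with M = 2N.\<close>
lemma euler_odd_parts:
  "fps_eq_upto (Suc N) (inf_prod {x. odd x} * inf_prod (even_parts_gt 0))
    (\<Sum>k\<le>N. fps_X ^ (k * k) * inf_prod (even_parts_gt k))"
proof -
  define M where "M = 2 * N"
  have "fps_eq_upto (Suc N) (inf_prod {x. odd x} * inf_prod (even_parts_gt 0))
      (\<Sum>k\<le>M. fps_X ^ (k * k) * (qbinom 2 M k * qpoch 2 M))"
    using fps_eq_upto_mult[OF inf_prod_odd_eq_upto inf_prod_even_parts_gt_0_eq_upto]
    by (simp only: M_def fin_prod_odd_qpoch)
  also have "fps_eq_upto (Suc N) \<dots> (\<Sum>k\<le>M. fps_X ^ (k * k) * inf_prod (even_parts_gt k))"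
    by (rule fps_eq_upto_sum) (simp add: M_def X_square_qbinom_qpoch_eq_upto)
  also have "\<dots> = (\<Sum>k\<le>N. fps_X ^ (k * k) * inf_prod (even_parts_gt k))
      + (\<Sum>k\<in>{N<..M}. fps_X ^ (k * k) * inf_prod (even_parts_gt k))"
  proof -
    have "{..M} = {..N} \<union> {N<..M}" by (auto simp: M_def)
    thus ?thesis by (metis (no_types, lifting) sum.union_disjoint finite_atMost finite_greaterThanAtMost
        atMost_iff greaterThanAtMost_iff disjoint_iff not_less)
  qed
  also have "fps_eq_upto (Suc N) \<dots> ((\<Sum>k\<le>N. fps_X ^ (k * k) * inf_prod (even_parts_gt k)) + 0)"
  proof (intro fps_eq_upto_add fps_eq_upto_refl)
    have "fps_eq_upto (Suc N) (\<Sum>k\<in>{N<..M}. fps_X ^ (k * k) * inf_prod (even_parts_gt k)) (\<Sum>k\<in>{N<..M}. 0)"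
    proof (rule fps_eq_upto_sum)
      fix k assume "k \<in> {N<..M}"
      hence "Suc N \<le> k * k" by (metis greaterThanAtMost_iff le_square le_trans Suc_leI)
      thus "fps_eq_upto (Suc N) (fps_X ^ (k * k) * inf_prod (even_parts_gt k)) 0"
        by (rule fps_eq_upto_X_power_mult_0)
    qed
    thus "fps_eq_upto (Suc N) (\<Sum>k\<in>{N<..M}. fps_X ^ (k * k) * inf_prod (even_parts_gt k)) 0" by simp
  qed
  finally show ?thesis by simp
qed

section \<open>Jacobi's triple product modulo 2\<close>

definition jtp_exp :: "nat \<Rightarrow> nat \<Rightarrow> int \<Rightarrow> nat" where
  "jtp_exp a c t = nat (int c * t + int a * (t * (t - 1) div 2))"

lemma abs_le_jtp_exp:
  assumes "0 < c" "c < a"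
  shows "\<bar>t\<bar> \<le> int c * t + int a * (t * (t - 1) div 2)"
proof (cases "t \<ge> 0")
  case True
  have "0 \<le> t * (t - 1)" using True by (cases "t = 0") (auto intro: mult_nonneg_nonneg)
  hence "0 \<le> int a * (t * (t - 1) div 2)" by simp
  moreover have "t \<le> int c * t" using True assms by (simp add: mult_right_mono[of 1 "int c" t, simplified])
  ultimately show ?thesis using True by simp
next
  case False
  have "0 \<le> (- t) * (- t - 1)" using False by (intro mult_nonneg_nonneg) auto
  hence "- t \<le> t * (t - 1) div 2" by (simp add: algebra_simps)
  hence "int a * (- t) \<le> int a * (t * (t - 1) div 2)" by (intro mult_left_mono) auto
  moreover have "0 \<le> (int a - int c - 1) * (- t)" using False assms by (intro mult_nonneg_nonneg) auto
  ultimately show ?thesis using False by (simp add: algebra_simps)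
qed

lemma two_jtp_exp:
  assumes "0 < c" "c < a"
  shows "2 * int (jtp_exp a c t) = 2 * int c * t + int a * (t * (t - 1))"
proof -
  have "0 \<le> int c * t + int a * (t * (t - 1) div 2)"
    using abs_le_jtp_exp[OF assms, of t] by linarith
  hence "2 * int (jtp_exp a c t) = 2 * int c * t + int a * (2 * (t * (t - 1) div 2))"
    unfolding jtp_exp_def by (simp add: algebra_simps)
  also have "2 * (t * (t - 1) div 2) = t * (t - 1)" by simp
  finally show ?thesis .
qed

lemma two_tri: "2 * int (tri k) = int k * (int k - 1)"
  by (induction k) (simp_all add: algebra_simps)

text \<open>Completing the square in the exponent of the \<open>k\<close>-th term of Rothe's theorem, with
  \<open>t = k - n\<close>.\<close>
lemma jtp_exponent_identity:
  assumes "0 < c" "c < a" "k \<le> 2 * n"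
  shows "c * k + a * n * (2 * n - k) + a * tri k = (c * n + a * tri n + a * n * n) + jtp_exp a c (int k - int n)"
proof -
  define t where "t = int k - int n"
  have "int (2 * n - k) = 2 * int n - int k" using assms(3) by simp
  hence "int (c * k + a * n * (2 * n - k) + a * tri k)
      = int c * int k + int a * int n * (2 * int n - int k) + int a * int (tri k)"
    by (simp only: of_nat_add of_nat_mult)
  hence "2 * int (c * k + a * n * (2 * n - k) + a * tri k)
      = 2 * int c * int k + 2 * int a * int n * (2 * int n - int k) + int a * (2 * int (tri k))"
    by (simp add: algebra_simps)
  also have "\<dots> = 2 * int c * int n + int a * (2 * int (tri n)) + 2 * int a * int n * int n
      + (2 * int c * t + int a * (t * (t - 1)))"
    unfolding two_tri t_def by (simp add: algebra_simps)
  also have "\<dots> = 2 * (int c * int n + int a * int (tri n) + int a * int n * int n) + 2 * int (jtp_exp a c t)"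
    unfolding two_jtp_exp[OF assms(1,2)] by (simp add: algebra_simps)
  also have "\<dots> = 2 * int ((c * n + a * tri n + a * n * n) + jtp_exp a c t)"
    by simp
  finally show ?thesis by (simp only: t_def mult_cancel_left of_nat_eq_iff) simp
qed

lemma sum_lessThan_id: "(\<Sum>u<n. u) = tri n"
  by (induction n) simp_all

text \<open>The residue classes \<open>-c\<close> and \<open>c\<close> modulo \<open>a\<close>, cut off after \<open>n\<close> elements.\<close>
definition parts_minus :: "nat \<Rightarrow> nat \<Rightarrow> nat \<Rightarrow> nat set" where
  "parts_minus a c n = (\<lambda>j. a * (n - j) - c) ` {..<n}"

definition parts_plus :: "nat \<Rightarrow> nat \<Rightarrow> nat \<Rightarrow> nat set" where
  "parts_plus a c n = (\<lambda>j. c + a * j) ` {..<n}"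

lemma finite_parts_minus [simp]: "finite (parts_minus a c n)"
  by (simp add: parts_minus_def)

lemma finite_parts_plus [simp]: "finite (parts_plus a c n)"
  by (simp add: parts_plus_def)

lemma fin_prod_parts_minus:
  assumes "0 < c" "c < a"
  shows "fin_prod (parts_minus a c n) = (\<Prod>u<n. 1 + fps_X ^ (a * (n - u) - c))"
  unfolding parts_minus_def
proof (rule fin_prod_image, rule inj_onI)
  fix x y assume xy: "x \<in> {..<n}" "y \<in> {..<n}" "a * (n - x) - c = a * (n - y) - c"
  have "a * 1 \<le> a * (n - x)" "a * 1 \<le> a * (n - y)" using xy(1,2) by (intro mult_le_mono2; simp)+
  hence "a * (n - x) = a * (n - y)" using xy(3) assms by linarith
  thus "x = y" using xy(1,2) assms by simp
qed

lemma fin_prod_parts_plus: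
  "0 < a \<Longrightarrow> fin_prod (parts_plus a c n) = (\<Prod>u<n. 1 + fps_X ^ (c + a * u))"
  unfolding parts_plus_def by (rule fin_prod_image) (auto simp: inj_on_def)

text \<open>Rothe's product with \<open>v = X\<^sup>a\<^sup>n\<close> and \<open>w = X\<^sup>c\<close>: pulling out \<open>X\<^sup>c\<^sup>+\<^sup>a\<^sup>u\<close> from the first \<open>n\<close>
  factors and \<open>X\<^sup>a\<^sup>n\<close> from the last \<open>n\<close> leaves the two truncated residue classes.\<close>
lemma rothe_jtp_product:
  assumes "0 < c" "c < a"
  shows "(\<Prod>u<2 * n. fps_X ^ (a * n) + fps_X ^ c * fps_X ^ (a * u) :: bfps)
    = fps_X ^ (c * n + a * tri n + a * n * n) * (fin_prod (parts_minus a c n) * fin_prod (parts_plus a c n))"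
proof -
  have low: "fps_X ^ (a * n) + fps_X ^ c * fps_X ^ (a * u) = fps_X ^ (c + a * u) * (1 + fps_X ^ (a * (n - u) - c) :: bfps)"
    if "u < n" for u
  proof -
    have "a * 1 \<le> a * (n - u)" using that by (intro mult_le_mono2) simp
    hence "c + a * u + (a * (n - u) - c) = a * n" using that assms by (simp add: diff_mult_distrib2)
    hence "fps_X ^ (c + a * u) * fps_X ^ (a * (n - u) - c) = (fps_X ^ (a * n) :: bfps)"
      by (simp only: power_add[symmetric])
    thus ?thesis by (simp add: distrib_left power_add add.commute)
  qed
  have high: "fps_X ^ (a * n) + fps_X ^ c * fps_X ^ (a * (n + u)) = fps_X ^ (a * n) * (1 + fps_X ^ (c + a * u) :: bfps)" for u
  proof -
    have "a * n + (c + a * u) = c + a * (n + u)" by (simp add: algebra_simps)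
    hence "fps_X ^ (a * n) * fps_X ^ (c + a * u) = fps_X ^ c * (fps_X ^ (a * (n + u)) :: bfps)"
      by (simp only: power_add[symmetric])
    thus ?thesis by (simp add: distrib_left)
  qed
  have "(\<Prod>u<2 * n. fps_X ^ (a * n) + fps_X ^ c * fps_X ^ (a * u) :: bfps)
      = (\<Prod>u<n. fps_X ^ (a * n) + fps_X ^ c * fps_X ^ (a * u)) * (\<Prod>u<n. fps_X ^ (a * n) + fps_X ^ c * fps_X ^ (a * (n + u)))"
  proof -
    have "(\<Prod>u<n + m. f u) = (\<Prod>u<n. f u) * (\<Prod>u<m. f (n + u))" for f :: "nat \<Rightarrow> bfps" and m
      by (induction m) (simp_all add: mult.assoc)
    thus ?thesis by (simp only: mult_2)
  qed
  also have "\<dots> = (\<Prod>u<n. fps_X ^ (c + a * u) * (1 + fps_X ^ (a * (n - u) - c))) * (\<Prod>u<n. fps_X ^ (a * n) * (1 + fps_X ^ (c + a * u)))"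
    using low high by simp
  also have "\<dots> = fps_X ^ (\<Sum>u<n. c + a * u) * fin_prod (parts_minus a c n) * (fps_X ^ (a * n * n) * fin_prod (parts_plus a c n))"
  proof -
    have "(\<Prod>u<n. fps_X ^ (a * n) :: bfps) = fps_X ^ (a * n * n)" by (simp add: power_mult)
    moreover have "0 < a" using assms by simp
    ultimately show ?thesis
      unfolding prod.distrib fin_prod_parts_minus[OF assms] fin_prod_parts_plus[OF \<open>0 < a\<close>] power_sum
      by (simp only: ac_simps)
  qed
  also have "(\<Sum>u<n. c + a * u) = c * n + a * tri n"
    by (simp add: sum.distrib sum_distrib_left[symmetric] sum_lessThan_id)
  finally show ?thesis by (simp add: power_add ac_simps)
qed

lemma jtp_finite:
  assumes "0 < c" "c < a"
  shows "fin_prod (parts_minus a c n) * fin_prod (parts_plus a c n)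
    = (\<Sum>k\<le>2 * n. fps_X ^ jtp_exp a c (int k - int n) * qbinom a (2 * n) k)"
proof -
  define A where "A = c * n + a * tri n + a * n * n"
  have "fps_X ^ A * (fin_prod (parts_minus a c n) * fin_prod (parts_plus a c n))
      = (\<Prod>u<2 * n. fps_X ^ (a * n) + fps_X ^ c * fps_X ^ (a * u))"
    using rothe_jtp_product[OF assms] by (simp add: A_def)
  also have "\<dots> = (\<Sum>k\<le>2 * n. (fps_X ^ c) ^ k * (fps_X ^ (a * n)) ^ (2 * n - k) * fps_X ^ (a * tri k) * qbinom a (2 * n) k)"
    by (rule rothe_q_binomial)
  also have "\<dots> = (\<Sum>k\<le>2 * n. fps_X ^ A * (fps_X ^ jtp_exp a c (int k - int n) * qbinom a (2 * n) k))"
  proof (intro sum.cong refl)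
    fix k assume "k \<in> {..2 * n}"
    hence "c * k + a * n * (2 * n - k) + a * tri k = A + jtp_exp a c (int k - int n)"
      using jtp_exponent_identity[OF assms] by (simp add: A_def)
    hence "(fps_X ^ c) ^ k * (fps_X ^ (a * n)) ^ (2 * n - k) * fps_X ^ (a * tri k)
        = fps_X ^ A * (fps_X ^ jtp_exp a c (int k - int n) :: bfps)"
      by (simp only: power_mult[symmetric] power_add[symmetric])
    thus "(fps_X ^ c) ^ k * (fps_X ^ (a * n)) ^ (2 * n - k) * fps_X ^ (a * tri k) * qbinom a (2 * n) k
        = fps_X ^ A * (fps_X ^ jtp_exp a c (int k - int n) * (qbinom a (2 * n) k :: bfps))"
      by (simp add: mult.assoc)
  qed
  also have "\<dots> = fps_X ^ A * (\<Sum>k\<le>2 * n. fps_X ^ jtp_exp a c (int k - int n) * qbinom a (2 * n) k)"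
    by (simp add: sum_distrib_left)
  finally show ?thesis by (rule fps_X_power_mult_cancel)
qed

lemma jtp_eq_upto:
  assumes "0 < c" "c < a" "2 * N \<le> n"
  shows "fps_eq_upto (Suc N) (fin_prod (parts_minus a c n) * fin_prod (parts_plus a c n) * qpoch a n)
    (\<Sum>k\<le>2 * n. fps_X ^ jtp_exp a c (int k - int n))"
proof -
  have "fin_prod (parts_minus a c n) * fin_prod (parts_plus a c n) * qpoch a n
      = (\<Sum>k\<le>2 * n. fps_X ^ jtp_exp a c (int k - int n) * (qbinom a (2 * n) k * qpoch a n))"
    by (simp add: jtp_finite[OF assms(1,2)] sum_distrib_right mult.assoc)
  also have "fps_eq_upto (Suc N) \<dots> (\<Sum>k\<le>2 * n. fps_X ^ jtp_exp a c (int k - int n))"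
  proof (rule fps_eq_upto_sum)
    fix k assume k: "k \<in> {..2 * n}"
    define e where "e = jtp_exp a c (int k - int n)"
    show "fps_eq_upto (Suc N) (fps_X ^ e * (qbinom a (2 * n) k * qpoch a n)) (fps_X ^ e)"
    proof (cases "Suc N \<le> e")
      case True
      have "fps_eq_upto (Suc N) (fps_X ^ e * (qbinom a (2 * n) k * qpoch a n)) 0"
        using True by (rule fps_eq_upto_X_power_mult_0)
      moreover have "fps_eq_upto (Suc N) (fps_X ^ e * 1 :: bfps) 0"
        using True by (rule fps_eq_upto_X_power_mult_0)
      ultimately show ?thesis by (metis fps_eq_upto_sym fps_eq_upto_trans mult_1_right)
    next
      case False
      \<comment> \<open>a low exponent forces \<open>k\<close> to be far from both ends, where \<open>qbinom \<cdot> qpoch \<approx> 1\<close>\<close>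
      hence "\<bar>int k - int n\<bar> \<le> int N"
        using abs_le_jtp_exp[OF assms(1,2), of "int k - int n"] by (simp add: e_def jtp_exp_def)
      hence "N \<le> min k (2 * n - k)" using assms(3) k by auto
      hence "Suc N \<le> 1 * (min k (2 * n - k) + 1)" by simp
      also have "\<dots> \<le> a * (min k (2 * n - k) + 1)" using assms(2) by (intro mult_le_mono1) simp
      finally have "Suc N \<le> a * (min k (2 * n - k) + 1)" .
      moreover have "fps_eq_upto (a * (min k (2 * n - k) + 1)) (qbinom a (2 * n) k * qpoch a n) 1"
        using k assms by (intro qbinom_qpoch_eq_upto_1) auto
      ultimately have "fps_eq_upto (Suc N) (qbinom a (2 * n) k * qpoch a n) 1"
        using fps_eq_upto_mono by blast
      from fps_eq_upto_mult_left[OF this, of "fps_X ^ e"] show ?thesis by simp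
    qed
  qed
  finally show ?thesis .
qed

lemma parts_minus_mod:
  assumes "x \<in> parts_minus a c n" "0 < c" "c < a"
  shows "x mod a = a - c"
proof -
  obtain j where "j < n" "x = a * (n - j) - c" using assms(1) unfolding parts_minus_def by auto
  hence x: "x = (a - c) + a * (n - j - 1)" using assms(2,3)
    by (cases "n - j") (simp_all add: algebra_simps)
  have "x mod a = (a - c) mod a" unfolding x by (rule mod_mult_self2)
  thus ?thesis using assms(2,3) by simp
qed

lemma parts_plus_mod: "x \<in> parts_plus a c n \<Longrightarrow> c < a \<Longrightarrow> x mod a = c"
  unfolding parts_plus_def by auto

lemma mem_jtp_parts:
  assumes "0 < c" "c < a" "1 \<le> x" "x \<le> N" "2 * N \<le> n" "x mod a \<in> {0, c, a - c}"
  shows "x \<in> parts_minus a c n \<union> parts_plus a c n \<union> (*) a ` {1..n}"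
proof -
  define q where "q = x div a"
  have x: "x = a * q + x mod a" unfolding q_def by simp
  have "q \<le> x" unfolding q_def by simp
  hence "q < n" using assms(3-5) by linarith
  consider "x mod a = 0" | "x mod a = c" | "x mod a = a - c" using assms(6) by auto
  thus ?thesis
  proof cases
    case 1
    hence "x = a * q" "q \<in> {1..n}" using x \<open>q < n\<close> assms(3) by auto
    thus ?thesis by blast
  next
    case 2
    hence "x = c + a * q" using x by simp
    thus ?thesis using \<open>q < n\<close> unfolding parts_plus_def by blast
  next
    case 3
    hence "x = a * (n - (n - Suc q)) - c" using x \<open>q < n\<close> assms(2) by (simp add: algebra_simps)
    moreover have "n - Suc q < n" using \<open>q < n\<close> by simp
    ultimately show ?thesis unfolding parts_minus_def by blast
  qed
qed

lemma inf_prod_residues_eq_upto_jtp: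
  assumes "0 < c" "c < a" "2 * c \<noteq> a" "2 * N \<le> n"
  shows "fps_eq_upto (Suc N) (inf_prod {x. x mod a \<in> {0, c, a - c}})
    (\<Sum>k\<le>2 * n. fps_X ^ jtp_exp a c (int k - int n))"
proof -
  define U where "U = parts_minus a c n \<union> parts_plus a c n \<union> (*) a ` {1..n}"
  have "qpoch a n = fin_prod ((*) a ` {1..n})"
    unfolding qpoch_def using assms(2) by (subst fin_prod_image) (auto simp: inj_on_def)
  moreover have "fin_prod (parts_minus a c n) * fin_prod (parts_plus a c n) * fin_prod ((*) a ` {1..n}) = fin_prod U"
  proof -
    have "parts_minus a c n \<inter> parts_plus a c n = {}"
      using parts_minus_mod[OF _ assms(1,2)] parts_plus_mod[OF _ assms(2)] assms(3) by fastforce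
    moreover have "(parts_minus a c n \<union> parts_plus a c n) \<inter> (*) a ` {1..n} = {}"
      using parts_minus_mod[OF _ assms(1,2)] parts_plus_mod[OF _ assms(2)] assms(1,2) by fastforce
    ultimately show ?thesis unfolding U_def by (simp add: fin_prod_Un)
  qed
  ultimately have jtp: "fps_eq_upto (Suc N) (fin_prod U) (\<Sum>k\<le>2 * n. fps_X ^ jtp_exp a c (int k - int n))"
    using jtp_eq_upto[OF assms(1,2,4)] by simp
  have pos: "0 < x" if "x \<in> parts_minus a c n \<union> parts_plus a c n" for x
  proof (rule ccontr)
    assume "\<not> 0 < x"
    thus False using that parts_minus_mod[OF _ assms(1,2)] parts_plus_mod[OF _ assms(2)] assms(1,2) by fastforce
  qed
  have "fps_eq_upto (Suc N) (inf_prod {x. x mod a \<in> {0, c, a - c}}) (fin_prod U)"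
  proof (rule inf_prod_eq_upto_fin_prod)
    show "finite U" by (simp add: U_def)
    show "U \<inter> {..<Suc N} = ({x. x mod a \<in> {0, c, a - c}} - {0}) \<inter> {..<Suc N}"
    proof (intro equalityI subsetI)
      fix x assume "x \<in> U \<inter> {..<Suc N}"
      thus "x \<in> ({x. x mod a \<in> {0, c, a - c}} - {0}) \<inter> {..<Suc N}"
        using parts_minus_mod[OF _ assms(1,2)] parts_plus_mod[OF _ assms(2)] pos assms(1,2)
        by (auto simp: U_def)
    next
      fix x assume "x \<in> ({x. x mod a \<in> {0, c, a - c}} - {0}) \<inter> {..<Suc N}"
      thus "x \<in> U \<inter> {..<Suc N}"
        using mem_jtp_parts[OF assms(1,2) _ _ assms(4), of x] by (auto simp: U_def)
    qed
  qed
  thus ?thesis using jtp by (rule fps_eq_upto_trans)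
qed

section \<open>Euler's product and its square and cube\<close>

abbreviation euler_prod :: bfps where
  "euler_prod \<equiv> inf_prod UNIV"

lemma inf_prod_even_parts_gt_0: "inf_prod (even_parts_gt 0) = euler_prod ^ 2"
proof -
  have "inf_prod (even_parts_gt 0) = (inf_prod {0<..})^2"
    unfolding even_parts_gt_def by (rule inf_prod_double)
  moreover have "{0<..} = UNIV - {0::nat}" by auto
  ultimately show ?thesis by (simp add: inf_prod_Diff_0)
qed

lemma euler_prod_odd_even: "euler_prod = inf_prod {x. odd x} * inf_prod (even_parts_gt 0)"
proof -
  have "UNIV = insert 0 ({x. odd x} \<union> even_parts_gt 0)"
    by (auto simp: even_parts_gt_def image_iff elim: evenE)
  moreover have "{x. odd x} \<inter> even_parts_gt 0 = {}"
    by (auto simp: even_parts_gt_def)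
  ultimately show ?thesis by (metis inf_prod_insert_0 inf_prod_Un)
qed

text \<open>Modulo 2, \<open>(q; q)\<^sub>\<infinity> = (q; q\<^sup>2)\<^sub>\<infinity> (q\<^sup>2; q\<^sup>2)\<^sub>\<infinity>\<close> and \<open>(q\<^sup>2; q\<^sup>2)\<^sub>\<infinity> = (q; q)\<^sub>\<infinity>\<^sup>2\<close>, so the odd parts
  give the inverse of \<open>(q; q)\<^sub>\<infinity>\<close>.\<close>
lemma inf_prod_odd_mult_euler_prod: "inf_prod {x. odd x} * euler_prod = 1"
proof -
  have "euler_prod * (inf_prod {x. odd x} * euler_prod) = euler_prod * 1"
    using euler_prod_odd_even by (simp add: inf_prod_even_parts_gt_0 power2_eq_square ac_simps)
  thus ?thesis using inf_prod_nonzero[of UNIV] by simp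
qed

lemma inf_prod_not_2_mod_4: "inf_prod {x. x mod 4 \<noteq> 2} = euler_prod ^ 3"
proof -
  have "UNIV = {x::nat. x mod 4 \<noteq> 2} \<union> (*) 2 ` {x. odd x}"
    by (auto simp: image_iff) presburger
  moreover have "{x::nat. x mod 4 \<noteq> 2} \<inter> (*) 2 ` {x. odd x} = {}"
    by auto presburger
  ultimately have "euler_prod = inf_prod {x. x mod 4 \<noteq> 2} * (inf_prod {x. odd x})^2"
    by (metis inf_prod_Un inf_prod_double)
  hence "euler_prod * euler_prod ^ 2 = inf_prod {x. x mod 4 \<noteq> 2} * (inf_prod {x. odd x} * euler_prod)^2"
    by (simp add: power2_eq_square ac_simps)
  thus ?thesis
    by (simp add: inf_prod_odd_mult_euler_prod power2_eq_square power3_eq_cube mult.assoc)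
qed

lemma euler_prod_eq_upto_theta:
  "fps_eq_upto (Suc N) euler_prod (\<Sum>k\<le>4 * N. fps_X ^ jtp_exp 3 2 (int k - int (2 * N)))"
proof -
  have "{x. x mod 3 \<in> {0, 2, 3 - 2}} = (UNIV :: nat set)" by auto
  thus ?thesis using inf_prod_residues_eq_upto_jtp[of 2 3 N "2 * N"] by simp
qed

lemma euler_prod_cube_eq_upto_theta:
  "fps_eq_upto (Suc N) (euler_prod ^ 3) (\<Sum>k\<le>4 * N. fps_X ^ jtp_exp 4 1 (int k - int (2 * N)))"
proof -
  have "{x. x mod 4 \<in> {0, 1, 4 - 1}} = {x::nat. x mod 4 \<noteq> 2}" by auto
  thus ?thesis using inf_prod_residues_eq_upto_jtp[of 1 4 N "2 * N"] by (simp add: inf_prod_not_2_mod_4)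
qed

section \<open>The generating function of \<open>c\<^sub>3\<close> modulo 2\<close>

definition c3_parts :: "nat \<Rightarrow> nat set" where
  "c3_parts j = {k. 2 \<le> k \<and> (odd k \<or> k \<le> 2 * j \<or> (4 dvd k \<and> 4 * j + 4 \<le> k))}"

lemma insert_1_c3_parts:
  "insert 1 (c3_parts j) = {x. odd x} \<union> ((*) 2 ` {1..j} \<union> (*) 2 ` even_parts_gt j)"
proof (intro equalityI subsetI)
  fix k assume k: "k \<in> insert 1 (c3_parts j)"
  show "k \<in> {x. odd x} \<union> ((*) 2 ` {1..j} \<union> (*) 2 ` even_parts_gt j)"
  proof (cases "odd k")
    case False
    hence "2 \<le> k" "k \<le> 2 * j \<or> (4 dvd k \<and> 4 * j + 4 \<le> k)" using k by (auto simp: c3_parts_def)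
    show ?thesis
    proof (cases "k \<le> 2 * j")
      case True
      hence "k = 2 * (k div 2)" "k div 2 \<in> {1..j}" using False \<open>2 \<le> k\<close> by auto
      thus ?thesis by blast
    next
      case False
      hence "k = 2 * (2 * (k div 4))" "k div 4 \<in> {j<..}" using \<open>k \<le> 2 * j \<or> _\<close> by auto
      thus ?thesis unfolding even_parts_gt_def by blast
    qed
  qed simp
next
  fix k assume "k \<in> {x. odd x} \<union> ((*) 2 ` {1..j} \<union> (*) 2 ` even_parts_gt j)"
  thus "k \<in> insert 1 (c3_parts j)"
    by (auto simp: c3_parts_def even_parts_gt_def elim!: oddE)
qed

text \<open>The even parts above \<open>2j\<close> allowed by \<open>c3_cond\<close> are the doubles of \<open>even_parts_gt j\<close>, so
  their product is a square; together with the odd parts and the even parts up to \<open>2j\<close> this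
  assembles \<open>euler_prod\<close>.\<close>
lemma c3_parts_factor: "(1 + fps_X) * inf_prod (c3_parts j) = euler_prod * inf_prod (even_parts_gt j)"
proof -
  have "{1} \<inter> c3_parts j = {}" by (simp add: c3_parts_def)
  hence "(1 + fps_X) * inf_prod (c3_parts j) = inf_prod ({1} \<union> c3_parts j)"
    by (simp only: inf_prod_Un inf_prod_singleton_1)
  also have "{1} \<union> c3_parts j = {x. odd x} \<union> ((*) 2 ` {1..j} \<union> (*) 2 ` even_parts_gt j)"
    using insert_1_c3_parts[of j] by simp
  also have "inf_prod \<dots> = inf_prod {x. odd x} * (inf_prod ((*) 2 ` {1..j}) * (inf_prod (even_parts_gt j))^2)"
  proof -
    have "{x. odd x} \<inter> ((*) 2 ` {1..j} \<union> (*) 2 ` even_parts_gt j) = {}" by auto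
    moreover have "(*) 2 ` {1..j} \<inter> (*) 2 ` even_parts_gt j = {}" by (auto simp: even_parts_gt_def)
    ultimately show ?thesis by (simp only: inf_prod_Un inf_prod_double)
  qed
  also have "inf_prod ((*) 2 ` {1..j}) * inf_prod (even_parts_gt j) = inf_prod (even_parts_gt 0)"
  proof -
    have "(*) 2 ` {1..j} \<union> even_parts_gt j = insert 0 (even_parts_gt 0) - {0}"
      by (auto simp: even_parts_gt_def image_iff)
    moreover have "(*) 2 ` {1..j} \<inter> even_parts_gt j = {}" by (auto simp: even_parts_gt_def)
    ultimately show ?thesis by (metis inf_prod_Un inf_prod_Diff_0 inf_prod_insert_0)
  qed
  hence "inf_prod {x. odd x} * (inf_prod ((*) 2 ` {1..j}) * (inf_prod (even_parts_gt j))^2)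
      = inf_prod {x. odd x} * inf_prod (even_parts_gt 0) * inf_prod (even_parts_gt j)"
    by (simp add: power2_eq_square ac_simps)
  finally show ?thesis by (simp add: euler_prod_odd_even)
qed

definition c3_poly :: "nat \<Rightarrow> bfps" where
  "c3_poly m = (\<Sum>j\<in>{1..m}. fps_X ^ (j * j) * (1 + fps_X) * fin_prod (c3_parts j \<inter> {1..m}))"

lemma c3_poly_eq_upto: "fps_eq_upto (Suc m) (c3_poly m) (euler_prod ^ 2 + euler_prod ^ 3)"
proof -
  let ?E = "euler_prod" and ?T = "\<lambda>j. inf_prod (even_parts_gt j)"
  have "fps_eq_upto (Suc m) (c3_poly m) (\<Sum>j\<in>{1..m}. fps_X ^ (j * j) * ((1 + fps_X) * inf_prod (c3_parts j)))"
    unfolding c3_poly_def mult.assoc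
    by (intro fps_eq_upto_sum fps_eq_upto_mult_left fps_eq_upto_sym[OF inf_prod_eq_upto_trunc])
  also have "\<dots> = ?E * ((\<Sum>j\<le>m. fps_X ^ (j * j) * ?T j) + ?T 0)"
  proof -
    have "{..m} = insert 0 {1..m}" by auto
    \<comment> \<open>the \<open>j = 0\<close> term of Euler's sum cancels against the added \<open>?T 0\<close> modulo 2\<close>
    hence "(\<Sum>j\<le>m. fps_X ^ (j * j) * ?T j) + ?T 0 = (\<Sum>j\<in>{1..m}. fps_X ^ (j * j) * ?T j)"
      by simp
    thus ?thesis unfolding c3_parts_factor by (simp add: sum_distrib_left ac_simps)
  qed
  also have "fps_eq_upto (Suc m) \<dots> (?E * (?E + ?T 0))"
    using euler_odd_parts[of m] euler_prod_odd_even
    by (intro fps_eq_upto_mult_left fps_eq_upto_add) (auto intro: fps_eq_upto_sym)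
  also have "?E * (?E + ?T 0) = ?E ^ 2 + ?E ^ 3"
    by (simp add: inf_prod_even_parts_gt_0 power2_eq_square power3_eq_cube algebra_simps)
  finally show ?thesis .
qed

lemma fin_prod_eq_sum_Pow: "finite F \<Longrightarrow> fin_prod F = (\<Sum>B\<in>Pow F. fps_X ^ (\<Sum>B))"
  unfolding fin_prod_def by (subst add.commute) (simp add: prod_add power_sum)

lemma fps_nth_sum_X_power:
  assumes "finite A"
  shows "(\<Sum>x\<in>A. fps_X ^ g x :: 'a::comm_semiring_1 fps) $ m = of_nat (card {x\<in>A. g x = m})"
proof -
  have "(\<Sum>x\<in>A. fps_X ^ g x :: 'a fps) $ m = (\<Sum>x\<in>A. if g x = m then 1 else 0)"
    unfolding fps_sum_nth by (rule sum.cong) auto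
  also have "\<dots> = of_nat (card {x\<in>A. g x = m})"
    using sum.inter_filter[OF assms, of "\<lambda>_. 1 :: 'a" "\<lambda>x. g x = m"] by simp
  finally show ?thesis .
qed

text \<open>A partition counted by \<open>c\<^sub>3(m)\<close> is encoded as \<open>(j, e, B)\<close>: \<open>j\<^sup>2 + e\<close> ones and the set \<open>B\<close>
  of its other (distinct) parts.\<close>
definition c3_index :: "nat \<Rightarrow> (nat \<times> nat \<times> nat set) set" where
  "c3_index m = Sigma {1..m} (\<lambda>j. Sigma {0..1} (\<lambda>e. Pow (c3_parts j \<inter> {1..m})))"

definition c3_weight :: "nat \<times> nat \<times> nat set \<Rightarrow> nat" where
  "c3_weight = (\<lambda>(j, e, B). j * j + e + \<Sum>B)"

definition c3_partition :: "nat \<times> nat \<times> nat set \<Rightarrow> nat multiset" where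
  "c3_partition = (\<lambda>(j, e, B). replicate_mset (j * j + e) 1 + mset_set B)"

lemma mem_c3_index [simp]:
  "(j, e, B) \<in> c3_index m \<longleftrightarrow> j \<in> {1..m} \<and> e \<le> 1 \<and> B \<subseteq> c3_parts j \<inter> {1..m}"
  by (auto simp: c3_index_def)

lemma finite_c3_index: "finite (c3_index m)"
  unfolding c3_index_def by (intro finite_SigmaI) auto

lemma c3_poly_eq_sum_index: "c3_poly m = (\<Sum>x\<in>c3_index m. fps_X ^ c3_weight x)"
proof -
  have "fps_X ^ (j * j) * (1 + fps_X) * fin_prod (c3_parts j \<inter> {1..m})
      = (\<Sum>e\<in>{0..1}. \<Sum>B\<in>Pow (c3_parts j \<inter> {1..m}). fps_X ^ (j * j + e + \<Sum>B))" for j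
    by (simp add: fin_prod_eq_sum_Pow sum_distrib_left power_add algebra_simps numeral_2_eq_2 sum.distrib)
  hence "c3_poly m = (\<Sum>j\<in>{1..m}. \<Sum>e\<in>{0..1}. \<Sum>B\<in>Pow (c3_parts j \<inter> {1..m}). fps_X ^ (j * j + e + \<Sum>B))"
    by (simp add: c3_poly_def)
  also have "\<dots> = (\<Sum>x\<in>c3_index m. fps_X ^ c3_weight x)"
    unfolding c3_index_def c3_weight_def by (subst sum.Sigma) (auto simp: sum.Sigma split_def)
  finally show ?thesis .
qed

lemma count_c3_partition:
  assumes "B \<subseteq> c3_parts j" "finite B"
  shows "count (c3_partition (j, e, B)) x = (if x = 1 then j * j + e else if x \<in> B then 1 else 0)"
proof -
  have "1 \<notin> B" using assms(1) by (auto simp: c3_parts_def)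
  thus ?thesis using assms(2) by (auto simp: c3_partition_def count_mset_set')
qed

lemma sum_mset_c3_partition: "finite B \<Longrightarrow> sum_mset (c3_partition (j, e, B)) = c3_weight (j, e, B)"
  by (simp add: c3_partition_def c3_weight_def sum_unfold_sum_mset)

lemma square_plus_le_1_inj:
  assumes "1 \<le> j" "1 \<le> j'" "e \<le> 1" "e' \<le> 1" "j * j + e = j' * j' + (e'::nat)"
  shows "j = j'"
proof (rule ccontr)
  assume "j \<noteq> j'"
  then consider "Suc j \<le> j'" | "Suc j' \<le> j" by linarith
  thus False
  proof cases
    case 1
    hence "Suc j * Suc j \<le> j' * j'" by (intro mult_le_mono)
    thus False using assms by simp
  next
    case 2
    hence "Suc j' * Suc j' \<le> j * j" by (intro mult_le_mono)
    thus False using assms by simp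
  qed
qed

lemma inj_on_c3_partition: "inj_on c3_partition (c3_index m)"
proof (rule inj_onI)
  fix x y assume xy: "x \<in> c3_index m" "y \<in> c3_index m" and eq: "c3_partition x = c3_partition y"
  obtain j e B j' e' B' where "x = (j, e, B)" "y = (j', e', B')" by (cases x, cases y)
  with xy have x: "x = (j, e, B)" "j \<in> {1..m}" "e \<le> 1" "B \<subseteq> c3_parts j \<inter> {1..m}"
    and y: "y = (j', e', B')" "j' \<in> {1..m}" "e' \<le> 1" "B' \<subseteq> c3_parts j' \<inter> {1..m}"
    by simp_all
  have "finite B" "finite B'"
    using finite_subset[of B "{1..m}"] finite_subset[of B' "{1..m}"] x(4) y(4) by auto
  hence count: "count (c3_partition x) z = (if z = 1 then j * j + e else if z \<in> B then 1 else 0)"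
    "count (c3_partition y) z = (if z = 1 then j' * j' + e' else if z \<in> B' then 1 else 0)" for z
    using x y by (simp_all add: count_c3_partition)
  have "j * j + e = j' * j' + e'" using count[of 1] eq by simp
  moreover from this have "j = j'" using square_plus_le_1_inj[of j j' e e'] x y by auto
  moreover have "B = B'"
  proof (rule set_eqI)
    fix z
    have "1 \<notin> B" "1 \<notin> B'" using x(4) y(4) by (auto simp: c3_parts_def)
    show "z \<in> B \<longleftrightarrow> z \<in> B'"
    proof (cases "z = 1")
      case False
      hence "(if z \<in> B then 1 else 0) = (if z \<in> B' then 1 else (0::nat))" using count[of z] eq by simp
      thus ?thesis by (auto split: if_splits)
    qed (use \<open>1 \<notin> B\<close> \<open>1 \<notin> B'\<close> in simp)
  qed
  ultimately show "x = y" using x y by simp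
qed

lemma c3_partition_is_c3:
  assumes "x \<in> c3_index m"
  shows "is_partition (c3_partition x) (c3_weight x) \<and> c3_cond (c3_partition x)"
proof -
  obtain j e B where x: "x = (j, e, B)" by (cases x)
  with assms have x: "x = (j, e, B)" "1 \<le> j" "e \<le> 1" "B \<subseteq> c3_parts j \<inter> {1..m}"
    by simp_all
  have "finite B" using finite_subset[of B "{1..m}"] x(4) by auto
  hence count: "count (c3_partition x) k = (if k = 1 then j * j + e else if k \<in> B then 1 else 0)" for k
    using x by (simp add: count_c3_partition)
  have mem: "k \<in># c3_partition x \<longleftrightarrow> k = 1 \<or> k \<in> B" for k
    using count[of k] count_eq_zero_iff[of "c3_partition x" k] x(2) by (auto split: if_splits)
  have "0 < k" if "k \<in># c3_partition x" for k
    using that mem x(4) by (auto simp: c3_parts_def)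
  hence "is_partition (c3_partition x) (c3_weight x)"
    using sum_mset_c3_partition[OF \<open>finite B\<close>] x(1) by (simp add: is_partition_def)
  moreover have "c3_cond (c3_partition x)"
    unfolding c3_cond_def
  proof (intro exI[of _ j] conjI allI impI ballI)
    show "count (c3_partition x) 1 = j^2 \<or> count (c3_partition x) 1 = j^2 + 1"
      using count[of 1] x(3) by (auto simp: power2_eq_square)
    fix k
    show "count (c3_partition x) k \<le> 1" if "odd k \<and> 1 < k" using count[of k] that by auto
    show "count (c3_partition x) k \<le> 1" if "even k" using count[of k] that by auto
    assume "k \<in># c3_partition x" "even k"
    hence "k \<in> c3_parts j" using mem x(4) by auto
    thus "k \<le> 2 * j \<or> (4 dvd k \<and> 4 * j + 4 \<le> k)" using \<open>even k\<close> by (auto simp: c3_parts_def)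
  qed (use x in simp)
  ultimately show ?thesis by blast
qed

lemma c3_partition_surj:
  assumes "is_partition p m" "c3_cond p"
  shows "\<exists>x\<in>c3_index m. c3_weight x = m \<and> p = c3_partition x"
proof -
  obtain j where j: "j \<ge> 1" "count p 1 = j^2 \<or> count p 1 = j^2 + 1"
    "\<forall>k. odd k \<and> k > 1 \<longrightarrow> count p k \<le> 1" "\<forall>k. even k \<longrightarrow> count p k \<le> 1"
    "\<forall>k\<in>#p. even k \<longrightarrow> (k \<le> 2*j \<or> (4 dvd k \<and> k \<ge> 4*j + 4))"
    using assms(2) unfolding c3_cond_def by blast
  define e where "e = count p 1 - j * j"
  define B where "B = set_mset p - {1}"
  have e: "e \<le> 1" "count p 1 = j * j + e" using j(2) by (auto simp: e_def power2_eq_square)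
  have sum: "sum_mset p = m" and pos: "\<And>x. x \<in># p \<Longrightarrow> 0 < x"
    using assms(1) by (auto simp: is_partition_def)
  have B: "B \<subseteq> c3_parts j \<inter> {1..m}"
  proof
    fix x assume "x \<in> B"
    hence x: "x \<in># p" "x \<noteq> 1" by (auto simp: B_def)
    have "x \<le> m" using x(1) sum by (metis le_add1 multi_member_split sum_mset.add_mset)
    thus "x \<in> c3_parts j \<inter> {1..m}" using pos[OF x(1)] x j(5) by (auto simp: c3_parts_def)
  qed
  have "finite B" by (simp add: B_def)
  have p: "p = c3_partition (j, e, B)"
  proof (rule multiset_eqI)
    fix x
    have "count p x \<le> 1" if "x \<noteq> 1" using j(3,4) that odd_pos[of x] by (cases "even x") auto
    thus "count p x = count (c3_partition (j, e, B)) x"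
      using e(2) B \<open>finite B\<close> count_eq_zero_iff[of p x] by (auto simp: count_c3_partition B_def)
  qed
  have "c3_weight (j, e, B) = m" using sum_mset_c3_partition[OF \<open>finite B\<close>] p sum by simp
  moreover have "j \<le> m"
  proof -
    have "j * j + e + \<Sum>B = m" using \<open>c3_weight (j, e, B) = m\<close> by (simp add: c3_weight_def)
    thus ?thesis using le_square[of j] by linarith
  qed
  moreover have "(j, e, B) \<in> c3_index m" using \<open>j \<le> m\<close> j(1) e(1) B by simp
  ultimately show ?thesis using p by blast
qed

lemma c3_eq_card_index: "c3 m = card {x \<in> c3_index m. c3_weight x = m}"
proof -
  have image: "c3_partition ` {x \<in> c3_index m. c3_weight x = m} = {p. is_partition p m \<and> c3_cond p}"
  proof (intro equalityI subsetI)
    fix p assume "p \<in> c3_partition ` {x \<in> c3_index m. c3_weight x = m}"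
    then obtain x where "x \<in> c3_index m" "c3_weight x = m" "p = c3_partition x" by blast
    thus "p \<in> {p. is_partition p m \<and> c3_cond p}" using c3_partition_is_c3[of x m] by simp
  next
    fix p assume "p \<in> {p. is_partition p m \<and> c3_cond p}"
    then obtain x where "x \<in> c3_index m" "c3_weight x = m" "p = c3_partition x"
      using c3_partition_surj[of p m] by blast
    thus "p \<in> c3_partition ` {x \<in> c3_index m. c3_weight x = m}" by blast
  qed
  have "inj_on c3_partition {x \<in> c3_index m. c3_weight x = m}"
    by (rule inj_on_subset[OF inj_on_c3_partition[of m]]) (rule Collect_restrict)
  from card_image[OF this] show ?thesis unfolding c3_def image .
qed

lemma c3_poly_nth: "c3_poly m $ m = of_nat (c3 m)"
  unfolding c3_poly_eq_sum_index c3_eq_card_index by (rule fps_nth_sum_X_power[OF finite_c3_index])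

section \<open>Parity of \<open>c\<^sub>3\<close> in three residue classes modulo 11\<close>

lemma theta_exponents_mod_11:
  fixes t :: int
  shows "(3 * t^2 + t) mod 11 \<notin> {5, 7, 9}" "(2 * t^2 - t) mod 11 \<notin> {5, 7, 9}"
proof -
  define q r where "q = t div 11" and "r = t mod 11"
  have t: "t = 11 * q + r" by (simp add: q_def r_def)
  have e: "3 * t^2 + t = 11 * (33 * q^2 + 6 * q * r + q) + (3 * r^2 + r)"
    "2 * t^2 - t = 11 * (22 * q^2 + 4 * q * r - q) + (2 * r^2 - r)"
    unfolding t by (simp_all add: power2_eq_square algebra_simps)
  have "(11 * s + v) mod 11 = v mod (11::int)" for s v by simp
  hence "(3 * t^2 + t) mod 11 = (3 * r^2 + r) mod 11" "(2 * t^2 - t) mod 11 = (2 * r^2 - r) mod 11"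
    by (simp_all only: e)
  moreover have "0 \<le> r" "r < 11" unfolding r_def by simp_all
  hence "r \<in> {0, 1, 2, 3, 4, 5, 6, 7, 8, 9, 10}" by simp presburger
  ultimately show "(3 * t^2 + t) mod 11 \<notin> {5, 7, 9}" "(2 * t^2 - t) mod 11 \<notin> {5, 7, 9}"
    by auto
qed

lemma fps_nth_sum_X_power_eq_0:
  assumes "\<And>k. k \<in> A \<Longrightarrow> g k \<noteq> m"
  shows "(\<Sum>k\<in>A. fps_X ^ g k :: 'a::comm_semiring_1 fps) $ m = 0"
proof -
  have "(\<Sum>k\<in>A. fps_X ^ g k :: 'a fps) $ m = (\<Sum>k\<in>A. 0)"
    unfolding fps_sum_nth by (rule sum.cong) (use assms in auto)
  thus ?thesis by simp
qed

lemma euler_prod_square_plus_cube_nth: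
  assumes "m mod 11 \<in> {5, 7, 9}"
  shows "(euler_prod ^ 2 + euler_prod ^ 3) $ m = 0"
proof -
  have "int m mod 11 = int (m mod 11)" by (simp add: of_nat_mod)
  hence m: "int m mod 11 \<in> {5, 7, 9}" using assms by auto
  let ?t = "\<lambda>k. int k - int (2 * m)"
  have "fps_eq_upto (Suc m) (euler_prod ^ 2) ((\<Sum>k\<le>4 * m. fps_X ^ jtp_exp 3 2 (?t k))^2)"
    using fps_eq_upto_mult[OF euler_prod_eq_upto_theta euler_prod_eq_upto_theta]
    by (simp add: power2_eq_square)
  also have "(\<Sum>k\<le>4 * m. fps_X ^ jtp_exp 3 2 (?t k))^2 = (\<Sum>k\<le>4 * m. fps_X ^ (2 * jtp_exp 3 2 (?t k)) :: bfps)"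
    by (simp add: bfps_power2_sum power_mult[symmetric] mult.commute)
  finally have "(euler_prod ^ 2) $ m = (\<Sum>k\<le>4 * m. fps_X ^ (2 * jtp_exp 3 2 (?t k)) :: bfps) $ m"
    by (simp add: fps_eq_upto_def)
  also have "\<dots> = 0"
  proof (rule fps_nth_sum_X_power_eq_0)
    fix k
    have "int (2 * jtp_exp 3 2 (?t k)) = 3 * (?t k)^2 + ?t k"
      using two_jtp_exp[of 2 3 "?t k"] by (simp add: power2_eq_square algebra_simps)
    note exp = this
    show "2 * jtp_exp 3 2 (?t k) \<noteq> m"
    proof
      assume "2 * jtp_exp 3 2 (?t k) = m"
      hence "int m = 3 * (?t k)^2 + ?t k" unfolding exp[symmetric] by simp
      hence "(3 * (?t k)^2 + ?t k) mod 11 \<in> {5, 7, 9}" using m by (simp only:)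
      thus False using theta_exponents_mod_11(1)[of "?t k"] by contradiction
    qed
  qed
  finally have square: "(euler_prod ^ 2) $ m = 0" .
  have "(euler_prod ^ 3) $ m = (\<Sum>k\<le>4 * m. fps_X ^ jtp_exp 4 1 (?t k) :: bfps) $ m"
    using euler_prod_cube_eq_upto_theta[of m] by (simp add: fps_eq_upto_def)
  also have "\<dots> = 0"
  proof (rule fps_nth_sum_X_power_eq_0)
    fix k
    have "int (jtp_exp 4 1 (?t k)) = 2 * (?t k)^2 - ?t k"
      using two_jtp_exp[of 1 4 "?t k"] by (simp add: power2_eq_square algebra_simps)
    note exp = this
    show "jtp_exp 4 1 (?t k) \<noteq> m"
    proof
      assume "jtp_exp 4 1 (?t k) = m"
      hence "int m = 2 * (?t k)^2 - ?t k" unfolding exp[symmetric] by simp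
      hence "(2 * (?t k)^2 - ?t k) mod 11 \<in> {5, 7, 9}" using m by (simp only:)
      thus False using theta_exponents_mod_11(2)[of "?t k"] by contradiction
    qed
  qed
  finally show ?thesis using square by simp
qed

lemma of_nat_bit_eq_0_iff: "(of_nat n :: bit) = 0 \<longleftrightarrow> even n"
  by (induction n) auto

lemma even_c3: "m mod 11 \<in> {5, 7, 9} \<Longrightarrow> even (c3 m)"
proof -
  assume "m mod 11 \<in> {5, 7, 9}"
  have "(of_nat (c3 m) :: bit) = c3_poly m $ m" by (rule c3_poly_nth[symmetric])
  also have "\<dots> = (euler_prod ^ 2 + euler_prod ^ 3) $ m"
    using c3_poly_eq_upto by (rule fps_eq_upto_nth) simp
  also have "\<dots> = 0" using euler_prod_square_plus_cube_nth \<open>m mod 11 \<in> {5, 7, 9}\<close> .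
  finally show ?thesis by (simp add: of_nat_bit_eq_0_iff)
qed

theorem theorem4:
  fixes n :: nat
  shows "even (c3 (11*n+5)) \<and> even (c3 (11*n+7)) \<and> even (c3 (11*n+9))"
  by (intro conjI even_c3) simp_all

end
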